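(* If $(\mathbb{X},\omega)$ is a $\mathcal{D}$-coalgebra, then $\mathbb{X}$ is a Cartesian differential category with differential combinator $\mathsf{D}^\omega[f]:=\omega(f)_1$.
   Context: Composition in diagrammatic order. A Cartesian left additive category: finite products, hom-sets commutative monoids with $f(g+h)=fg+fh$, $f0=0$, projections additive. A Cartesian differential category: a Cartesian left additive category with a combinator $f:A\to B\mapsto\mathsf{D}[f]:A\times A\to B$ satisfying [CD.1] $\mathsf{D}[f+g]=\mathsf{D}[f]+\mathsf{D}[g]$, $\mathsf{D}[0]=0$; [CD.2] $(1\times(\pi_0+\pi_1))\mathsf{D}[f]=(1\times\pi_0)\mathsf{D}[f]+(1\times\pi_1)\mathsf{D}[f]$, $\langle1,0\rangle\mathsf{D}[f]=0$; [CD.3] $\mathsf{D}[1]=\pi_1$, $\mathsf{D}[\pi_j]=\pi_1\pi_j$; [CD.4] $\mathsf{D}[\langle f,g\rangle]=\langle\mathsf{D}[f],\mathsf{D}[g]\rangle$; [CD.5] $\mathsf{D}[fg]=\langle\pi_0f,\mathsf{D}[f]\rangle\mathsf{D}[g]$; [CD.6] $\ell\mathsf{D}^2[f]=\mathsf{D}[f]$, $\ell=\langle1,0\rangle\times\langle0,1\rangle$; [CD.7] $c\mathsf{D}^2[f]=\mathsf{D}^2[f]$, $c=\langle\langle\pi_0\pi_0,\pi_1\pi_0\rangle,\langle\pi_0\pi_1,\pi_1\pi_1\rangle\rangle$ on $(A\times A)\times(A\times A)$. Let $\mathsf{P}(A)=A\times A$, $\mathsf{P}(f)=f\times f$. A pre-$\mathsf{D}$-sequence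 $f_\bullet:A\to B$ is $(f_n)$, $f_n:\mathsf{P}^n(A)\to B$; $(h\cdot f_\bullet)_n=\mathsf{P}^n(h)f_n$; $\mathsf{T}(f_\bullet)_n=\langle\mathsf{P}^n(\pi_0)f_n,f_{n+1}\rangle$; $\mathsf{D}[f_\bullet]_n=f_{n+1}$; identity $i_0=1$, $i_n=\pi_1\cdots\pi_1$ ($n$ times); composition $(f_\bullet\ast g_\bullet)_n=\mathsf{T}^n(f_\bullet)_0g_n$; products: projections $i_\bullet\cdot\pi_j$, pairing pointwise; addition pointwise. A $\mathsf{D}$-sequence: pre-$\mathsf{D}$-sequence with, for all $n$ and $C=\mathsf{P}^n(A)$, $\langle1,0\rangle\cdot\mathsf{D}^{n+1}[f_\bullet]=0_\bullet$, $(1\times(\pi_0+\pi_1))\cdot\mathsf{D}^{n+1}[f_\bullet]=(1\times\pi_0)\cdot\mathsf{D}^{n+1}[f_\bullet]+(1\times\pi_1)\cdot\mathsf{D}^{n+1}[f_\bullet]$, $\ell\cdot\mathsf{D}^{n+2}[f_\bullet]=\mathsf{D}^{n+1}[f_\bullet]$, $c\cdot\mathsf{D}^{n+2}[f_\bullet]=\mathsf{D}^{n+2}[f_\bullet]$ (maps for $C$). $\mathcal{D}[\mathbb{X}]$: the category of $\mathsf{D}$-sequences. $\mathcal{D}[\mathsf{F}](f_\bullet)_n=\mathsf{F}(f_n)$; $\varepsilon(f_\bullet)=f_0$; $\delta(f_\bullet)_0=f_\bullet$, $\delta(f_\bullet)_n=\mathsf{D}^n[f_\bullet]$. A $\mathcal{D}$-coalgebra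 is $(\mathbb{X},\omega)$, $\mathbb{X}$ a Cartesian left additive category, $\omega:\mathbb{X}\to\mathcal{D}[\mathbb{X}]$ a functor preserving finite products strictly and $+,0$, with $\omega\varepsilon=1_{\mathbb{X}}$ and $\omega\delta=\omega\,\mathcal{D}[\omega]$. *)

theory Defs
  imports Main
begin

text \<open>A (concrete, set-based) presentation of a Cartesian left additive category.
  Composition is written in diagrammatic order: cmp f g means "first f, then g".\<close>

record ('o, 'a) cla_struct =
  Ob   :: "'o set"
  Ar   :: "'a set"
  dm   :: "'a \<Rightarrow> 'o"
  cd   :: "'a \<Rightarrow> 'o"
  idm  :: "'o \<Rightarrow> 'a"
  cmp  :: "'a \<Rightarrow> 'a \<Rightarrow> 'a"
  prd  :: "'o \<Rightarrow> 'o \<Rightarrow> 'o"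
  trm  :: "'o"
  pr0  :: "'o \<Rightarrow> 'o \<Rightarrow> 'a"
  pr1  :: "'o \<Rightarrow> 'o \<Rightarrow> 'a"
  pair :: "'a \<Rightarrow> 'a \<Rightarrow> 'a"
  bang :: "'o \<Rightarrow> 'a"
  add  :: "'a \<Rightarrow> 'a \<Rightarrow> 'a"
  zer  :: "'o \<Rightarrow> 'o \<Rightarrow> 'a"

definition hom :: "('o, 'a, 'm) cla_struct_scheme \<Rightarrow> 'o \<Rightarrow> 'o \<Rightarrow> 'a set" where
  "hom X A B = {f \<in> Ar X. dm X f = A \<and> cd X f = B}"

definition cla :: "('o, 'a, 'm) cla_struct_scheme \<Rightarrow> bool" where
  "cla X \<longleftrightarrow>
     \<comment> \<open>category\<close>
     (\<forall>f \<in> Ar X. dm X f \<in> Ob X \<and> cd X f \<in> Ob X) \<and>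
     (\<forall>A \<in> Ob X. idm X A \<in> hom X A A) \<and>
     (\<forall>A B C f g. f \<in> hom X A B \<and> g \<in> hom X B C \<longrightarrow> cmp X f g \<in> hom X A C) \<and>
     (\<forall>A B C D f g h. f \<in> hom X A B \<and> g \<in> hom X B C \<and> h \<in> hom X C D \<longrightarrow>
        cmp X (cmp X f g) h = cmp X f (cmp X g h)) \<and>
     (\<forall>A B f. f \<in> hom X A B \<longrightarrow> cmp X (idm X A) f = f \<and> cmp X f (idm X B) = f) \<and>
     \<comment> \<open>finite products: terminal object and binary products\<close>
     trm X \<in> Ob X \<and>
     (\<forall>A \<in> Ob X. bang X A \<in> hom X A (trm X) \<and> (\<forall>f \<in> hom X A (trm X). f = bang X A)) \<and>
     (\<forall>A \<in> Ob X. \<forall>B \<in> Ob X. prd X A B \<in> Ob X \<and>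
        pr0 X A B \<in> hom X (prd X A B) A \<and> pr1 X A B \<in> hom X (prd X A B) B) \<and>
     (\<forall>A B C f g. A \<in> Ob X \<and> B \<in> Ob X \<and> f \<in> hom X C A \<and> g \<in> hom X C B \<longrightarrow>
        pair X f g \<in> hom X C (prd X A B) \<and>
        cmp X (pair X f g) (pr0 X A B) = f \<and> cmp X (pair X f g) (pr1 X A B) = g) \<and>
     (\<forall>A B C h. A \<in> Ob X \<and> B \<in> Ob X \<and> h \<in> hom X C (prd X A B) \<longrightarrow>
        pair X (cmp X h (pr0 X A B)) (cmp X h (pr1 X A B)) = h) \<and>
     \<comment> \<open>hom-sets are commutative monoids\<close>
     (\<forall>A \<in> Ob X. \<forall>B \<in> Ob X. zer X A B \<in> hom X A B) \<and>
     (\<forall>A B f g. f \<in> hom X A B \<and> g \<in> hom X A B \<longrightarrow> add X f g \<in> hom X A B) \<and>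
     (\<forall>A B f g h. f \<in> hom X A B \<and> g \<in> hom X A B \<and> h \<in> hom X A B \<longrightarrow>
        add X (add X f g) h = add X f (add X g h)) \<and>
     (\<forall>A B f g. f \<in> hom X A B \<and> g \<in> hom X A B \<longrightarrow> add X f g = add X g f) \<and>
     (\<forall>A B f. f \<in> hom X A B \<longrightarrow> add X f (zer X A B) = f) \<and>
     \<comment> \<open>left additivity: f(g+h) = fg + fh, f0 = 0\<close>
     (\<forall>A B C f g h. f \<in> hom X A B \<and> g \<in> hom X B C \<and> h \<in> hom X B C \<longrightarrow>
        cmp X f (add X g h) = add X (cmp X f g) (cmp X f h)) \<and>
     (\<forall>A B C f. f \<in> hom X A B \<and> C \<in> Ob X \<longrightarrow> cmp X f (zer X B C) = zer X A C) \<and>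
     \<comment> \<open>projections are additive\<close>
     (\<forall>A B C f g. A \<in> Ob X \<and> B \<in> Ob X \<and> f \<in> hom X C (prd X A B) \<and> g \<in> hom X C (prd X A B) \<longrightarrow>
        cmp X (add X f g) (pr0 X A B) = add X (cmp X f (pr0 X A B)) (cmp X g (pr0 X A B)) \<and>
        cmp X (add X f g) (pr1 X A B) = add X (cmp X f (pr1 X A B)) (cmp X g (pr1 X A B))) \<and>
     (\<forall>A B C. A \<in> Ob X \<and> B \<in> Ob X \<and> C \<in> Ob X \<longrightarrow>
        cmp X (zer X C (prd X A B)) (pr0 X A B) = zer X C A \<and>
        cmp X (zer X C (prd X A B)) (pr1 X A B) = zer X C B)"

definition tmap :: "('o, 'a, 'm) cla_struct_scheme \<Rightarrow> 'a \<Rightarrow> 'a \<Rightarrow> 'a" where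
  "tmap X f g = pair X (cmp X (pr0 X (dm X f) (dm X g)) f) (cmp X (pr1 X (dm X f) (dm X g)) g)"

fun Pob :: "('o, 'a, 'm) cla_struct_scheme \<Rightarrow> nat \<Rightarrow> 'o \<Rightarrow> 'o" where
  "Pob X 0 A = A"
| "Pob X (Suc n) A = prd X (Pob X n A) (Pob X n A)"

fun Pmap :: "('o, 'a, 'm) cla_struct_scheme \<Rightarrow> nat \<Rightarrow> 'a \<Rightarrow> 'a" where
  "Pmap X 0 h = h"
| "Pmap X (Suc n) h = tmap X (Pmap X n h) (Pmap X n h)"

definition pre_dseq :: "('o, 'a, 'm) cla_struct_scheme \<Rightarrow> 'o \<Rightarrow> 'o \<Rightarrow> (nat \<Rightarrow> 'a) \<Rightarrow> bool" where
  "pre_dseq X A B f \<longleftrightarrow> (\<forall>n. f n \<in> hom X (Pob X n A) B)"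

definition act :: "('o, 'a, 'm) cla_struct_scheme \<Rightarrow> 'a \<Rightarrow> (nat \<Rightarrow> 'a) \<Rightarrow> nat \<Rightarrow> 'a" where
  "act X h f = (\<lambda>n. cmp X (Pmap X n h) (f n))"

definition Dpow :: "nat \<Rightarrow> (nat \<Rightarrow> 'a) \<Rightarrow> nat \<Rightarrow> 'a" where
  "Dpow k f = (\<lambda>n. f (k + n))"

definition Tseq :: "('o, 'a, 'm) cla_struct_scheme \<Rightarrow> 'o \<Rightarrow> (nat \<Rightarrow> 'a) \<Rightarrow> nat \<Rightarrow> 'a" where
  "Tseq X A f = (\<lambda>n. pair X (cmp X (Pmap X n (pr0 X A A)) (f n)) (f (Suc n)))"

fun Titer :: "('o, 'a, 'm) cla_struct_scheme \<Rightarrow> 'o \<Rightarrow> nat \<Rightarrow> (nat \<Rightarrow> 'a) \<Rightarrow> nat \<Rightarrow> 'a" where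
  "Titer X A 0 f = f"
| "Titer X A (Suc n) f = Tseq X (Pob X n A) (Titer X A n f)"

fun idseq :: "('o, 'a, 'm) cla_struct_scheme \<Rightarrow> 'o \<Rightarrow> nat \<Rightarrow> 'a" where
  "idseq X A 0 = idm X A"
| "idseq X A (Suc n) = cmp X (pr1 X (Pob X n A) (Pob X n A)) (idseq X A n)"

definition compseq :: "('o, 'a, 'm) cla_struct_scheme \<Rightarrow> 'o \<Rightarrow> (nat \<Rightarrow> 'a) \<Rightarrow> (nat \<Rightarrow> 'a) \<Rightarrow> nat \<Rightarrow> 'a" where
  "compseq X A f g = (\<lambda>n. cmp X (Titer X A n f 0) (g n))"

definition zeroseq :: "('o, 'a, 'm) cla_struct_scheme \<Rightarrow> 'o \<Rightarrow> 'o \<Rightarrow> nat \<Rightarrow> 'a" where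
  "zeroseq X A B = (\<lambda>n. zer X (Pob X n A) B)"

definition addseq :: "('o, 'a, 'm) cla_struct_scheme \<Rightarrow> (nat \<Rightarrow> 'a) \<Rightarrow> (nat \<Rightarrow> 'a) \<Rightarrow> nat \<Rightarrow> 'a" where
  "addseq X f g = (\<lambda>n. add X (f n) (g n))"

definition pairseq :: "('o, 'a, 'm) cla_struct_scheme \<Rightarrow> (nat \<Rightarrow> 'a) \<Rightarrow> (nat \<Rightarrow> 'a) \<Rightarrow> nat \<Rightarrow> 'a" where
  "pairseq X f g = (\<lambda>n. pair X (f n) (g n))"

definition bangseq :: "('o, 'a, 'm) cla_struct_scheme \<Rightarrow> 'o \<Rightarrow> nat \<Rightarrow> 'a" where
  "bangseq X A = (\<lambda>n. bang X (Pob X n A))"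

definition ell :: "('o, 'a, 'm) cla_struct_scheme \<Rightarrow> 'o \<Rightarrow> 'a" where
  "ell X C = tmap X (pair X (idm X C) (zer X C C)) (pair X (zer X C C) (idm X C))"

definition cswap :: "('o, 'a, 'm) cla_struct_scheme \<Rightarrow> 'o \<Rightarrow> 'a" where
  "cswap X C = (let Q = prd X C C;
                    q0 = pr0 X Q Q; q1 = pr1 X Q Q;
                    p0 = pr0 X C C; p1 = pr1 X C C
                in pair X (pair X (cmp X q0 p0) (cmp X q1 p0))
                          (pair X (cmp X q0 p1) (cmp X q1 p1)))"

definition dseq :: "('o, 'a, 'm) cla_struct_scheme \<Rightarrow> 'o \<Rightarrow> 'o \<Rightarrow> (nat \<Rightarrow> 'a) \<Rightarrow> bool" where
  "dseq X A B f \<longleftrightarrow> pre_dseq X A B f \<and>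
     (\<forall>n. let C = Pob X n A in
        act X (pair X (idm X C) (zer X C C)) (Dpow (Suc n) f) = zeroseq X C B \<and>
        act X (tmap X (idm X C) (add X (pr0 X C C) (pr1 X C C))) (Dpow (Suc n) f) =
          addseq X (act X (tmap X (idm X C) (pr0 X C C)) (Dpow (Suc n) f))
                   (act X (tmap X (idm X C) (pr1 X C C)) (Dpow (Suc n) f)) \<and>
        act X (ell X C) (Dpow (Suc (Suc n)) f) = Dpow (Suc n) f \<and>
        act X (cswap X C) (Dpow (Suc (Suc n)) f) = Dpow (Suc (Suc n)) f)"

text \<open>The functor \<omega> is the identity on objects (forced by
  \<omega>\<varepsilon> = 1, since \<varepsilon> is the identity on objects); on arrows it sends f : A \<rightarrow> B
  to a D-sequence \<omega> f : A \<rightarrow> B.\<close>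
definition D_coalgebra :: "('o, 'a, 'm) cla_struct_scheme \<Rightarrow> ('a \<Rightarrow> nat \<Rightarrow> 'a) \<Rightarrow> bool" where
  "D_coalgebra X \<omega> \<longleftrightarrow> cla X \<and>
     \<comment> \<open>\<omega> lands in D[X]\<close>
     (\<forall>A B f. f \<in> hom X A B \<longrightarrow> dseq X A B (\<omega> f)) \<and>
     \<comment> \<open>functoriality\<close>
     (\<forall>A \<in> Ob X. \<omega> (idm X A) = idseq X A) \<and>
     (\<forall>A B C f g. f \<in> hom X A B \<and> g \<in> hom X B C \<longrightarrow>
        \<omega> (cmp X f g) = compseq X A (\<omega> f) (\<omega> g)) \<and>
     \<comment> \<open>strict preservation of finite products\<close>
     (\<forall>A \<in> Ob X. \<omega> (bang X A) = bangseq X A) \<and>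
     (\<forall>A \<in> Ob X. \<forall>B \<in> Ob X.
        \<omega> (pr0 X A B) = act X (pr0 X A B) (idseq X A) \<and>
        \<omega> (pr1 X A B) = act X (pr1 X A B) (idseq X B)) \<and>
     (\<forall>A B C f g. A \<in> Ob X \<and> B \<in> Ob X \<and> f \<in> hom X C A \<and> g \<in> hom X C B \<longrightarrow>
        \<omega> (pair X f g) = pairseq X (\<omega> f) (\<omega> g)) \<and>
     \<comment> \<open>preservation of + and 0\<close>
     (\<forall>A B f g. f \<in> hom X A B \<and> g \<in> hom X A B \<longrightarrow> \<omega> (add X f g) = addseq X (\<omega> f) (\<omega> g)) \<and>
     (\<forall>A \<in> Ob X. \<forall>B \<in> Ob X. \<omega> (zer X A B) = zeroseq X A B) \<and>
     \<comment> \<open>\<omega>\<varepsilon> = 1\<close>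
     (\<forall>f \<in> Ar X. \<omega> f 0 = f) \<and>
     \<comment> \<open>\<omega>\<delta> = \<omega> D[\<omega>]: \<delta>(\<omega> f)_n = D^n[\<omega> f] and D[\<omega>](\<omega> f)_n = \<omega>((\<omega> f)_n)\<close>
     (\<forall>f \<in> Ar X. \<forall>n. \<omega> (\<omega> f n) = Dpow n (\<omega> f))"

definition cdc :: "('o, 'a, 'm) cla_struct_scheme \<Rightarrow> ('a \<Rightarrow> 'a) \<Rightarrow> bool" where
  "cdc X D \<longleftrightarrow> cla X \<and>
     (\<forall>A B f. f \<in> hom X A B \<longrightarrow> D f \<in> hom X (prd X A A) B) \<and>
     \<comment> \<open>CD.1\<close>
     (\<forall>A B f g. f \<in> hom X A B \<and> g \<in> hom X A B \<longrightarrow> D (add X f g) = add X (D f) (D g)) \<and>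
     (\<forall>A \<in> Ob X. \<forall>B \<in> Ob X. D (zer X A B) = zer X (prd X A A) B) \<and>
     \<comment> \<open>CD.2\<close>
     (\<forall>A B f. f \<in> hom X A B \<longrightarrow>
        cmp X (tmap X (idm X A) (add X (pr0 X A A) (pr1 X A A))) (D f) =
          add X (cmp X (tmap X (idm X A) (pr0 X A A)) (D f))
                (cmp X (tmap X (idm X A) (pr1 X A A)) (D f)) \<and>
        cmp X (pair X (idm X A) (zer X A A)) (D f) = zer X A B) \<and>
     \<comment> \<open>CD.3\<close>
     (\<forall>A \<in> Ob X. D (idm X A) = pr1 X A A) \<and>
     (\<forall>A \<in> Ob X. \<forall>B \<in> Ob X.
        D (pr0 X A B) = cmp X (pr1 X (prd X A B) (prd X A B)) (pr0 X A B) \<and>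
        D (pr1 X A B) = cmp X (pr1 X (prd X A B) (prd X A B)) (pr1 X A B)) \<and>
     \<comment> \<open>CD.4\<close>
     (\<forall>A B C f g. A \<in> Ob X \<and> B \<in> Ob X \<and> f \<in> hom X C A \<and> g \<in> hom X C B \<longrightarrow>
        D (pair X f g) = pair X (D f) (D g)) \<and>
     \<comment> \<open>CD.5\<close>
     (\<forall>A B C f g. f \<in> hom X A B \<and> g \<in> hom X B C \<longrightarrow>
        D (cmp X f g) = cmp X (pair X (cmp X (pr0 X A A) f) (D f)) (D g)) \<and>
     \<comment> \<open>CD.6\<close>
     (\<forall>A B f. f \<in> hom X A B \<longrightarrow> cmp X (ell X A) (D (D f)) = D f) \<and>
     \<comment> \<open>CD.7\<close>
     (\<forall>A B f. f \<in> hom X A B \<longrightarrow> cmp X (cswap X A) (D (D f)) = D (D f))"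

end

theory Submission
  imports Defs
begin

text \<open>The D-sequence \<open>\<omega>(f)\<close> carries all higher derivatives of \<open>f\<close>: \<open>D\<^sup>\<omega>[f] = \<omega>(f)\<^sub>1\<close>, and
  the law \<open>\<omega>\<delta> = \<omega> D[\<omega>]\<close> gives \<open>\<omega>(\<omega>(f)\<^sub>1)\<^sub>1 = \<omega>(f)\<^sub>2\<close>, so the second derivative is the next
  term of the same sequence. Each axiom is then read off at a low index: CD.1, CD.3 and CD.4
  from the preservation of \<open>+\<close>, \<open>0\<close>, identities, projections and pairing; the chain rule CD.5
  from \<open>(\<omega>(f) \<ast> \<omega>(g))\<^sub>1 = \<langle>\<pi>\<^sub>0 \<omega>(f)\<^sub>0, \<omega>(f)\<^sub>1\<rangle> \<omega>(g)\<^sub>1\<close> together with the counit law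
  \<open>\<omega>(f)\<^sub>0 = f\<close>; and CD.2, CD.6, CD.7 are the level-0 instances of the D-sequence laws of \<open>\<omega>(f)\<close>.\<close>

lemma cla_arrow_ob: "cla X \<Longrightarrow> f \<in> Ar X \<Longrightarrow> dm X f \<in> Ob X \<and> cd X f \<in> Ob X"
  unfolding cla_def by (elim conjE) (simp only:)

lemma cla_dom_cod_ob:
  assumes "cla X" and "f \<in> hom X A B"
  shows "A \<in> Ob X" and "B \<in> Ob X"
  using assms cla_arrow_ob[of X f] unfolding hom_def by auto

lemma cla_comp_hom: "cla X \<Longrightarrow> f \<in> hom X A B \<Longrightarrow> g \<in> hom X B C \<Longrightarrow> cmp X f g \<in> hom X A C"
  unfolding cla_def by (elim conjE) (simp only:)

lemma cla_comp_id_right: "cla X \<Longrightarrow> f \<in> hom X A B \<Longrightarrow> cmp X f (idm X B) = f"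
  unfolding cla_def by (elim conjE) (simp only:)

lemma cla_pr0_hom: "cla X \<Longrightarrow> A \<in> Ob X \<Longrightarrow> B \<in> Ob X \<Longrightarrow> pr0 X A B \<in> hom X (prd X A B) A"
  unfolding cla_def by (elim conjE) (simp only:)

lemma cla_pr1_hom: "cla X \<Longrightarrow> A \<in> Ob X \<Longrightarrow> B \<in> Ob X \<Longrightarrow> pr1 X A B \<in> hom X (prd X A B) B"
  unfolding cla_def by (elim conjE) (simp only:)

lemma cla_pair_pr1:
  "cla X \<Longrightarrow> A \<in> Ob X \<Longrightarrow> B \<in> Ob X \<Longrightarrow> f \<in> hom X C A \<Longrightarrow> g \<in> hom X C B \<Longrightarrow>
    cmp X (pair X f g) (pr1 X A B) = g"
  unfolding cla_def by (elim conjE) (simp only:)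

lemma tmap_comp_pr1:
  assumes X: "cla X" and f: "f \<in> hom X A B" and g: "g \<in> hom X C D"
  shows "cmp X (tmap X f g) (pr1 X B D) = cmp X (pr1 X A C) g"
proof -
  have obs: "A \<in> Ob X" "B \<in> Ob X" "C \<in> Ob X" "D \<in> Ob X"
    using cla_dom_cod_ob[OF X f] cla_dom_cod_ob[OF X g] by auto
  have "dm X f = A" "dm X g = C"
    using f g by (simp_all add: hom_def)
  moreover have "cmp X (pr0 X A C) f \<in> hom X (prd X A C) B" "cmp X (pr1 X A C) g \<in> hom X (prd X A C) D"
    by (rule cla_comp_hom[OF X cla_pr0_hom[OF X obs(1,3)] f],
        rule cla_comp_hom[OF X cla_pr1_hom[OF X obs(1,3)] g])
  ultimately show ?thesis
    unfolding tmap_def using cla_pair_pr1[OF X obs(2,4)] by simp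
qed

lemma idseq_1: "cla X \<Longrightarrow> A \<in> Ob X \<Longrightarrow> idseq X A 1 = pr1 X A A"
  using cla_comp_id_right cla_pr1_hom by fastforce

lemma act_idseq_1:
  assumes X: "cla X" and h: "h \<in> hom X C A"
  shows "act X h (idseq X A) 1 = cmp X (pr1 X C C) h"
proof -
  have "A \<in> Ob X"
    using cla_dom_cod_ob[OF X h] by simp
  then have "act X h (idseq X A) 1 = cmp X (tmap X h h) (pr1 X A A)"
    using idseq_1[OF X] by (simp add: act_def)
  also have "\<dots> = cmp X (pr1 X C C) h"
    by (rule tmap_comp_pr1[OF X h h])
  finally show ?thesis .
qed

lemma compseq_1: "compseq X A f g 1 = cmp X (pair X (cmp X (pr0 X A A) (f 0)) (f 1)) (g 1)"
  by (simp add: compseq_def Tseq_def)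

lemma dseq_laws_at_level_0:
  assumes "dseq X A B f"
  shows "cmp X (pair X (idm X A) (zer X A A)) (f 1) = zer X A B"
    and "cmp X (tmap X (idm X A) (add X (pr0 X A A) (pr1 X A A))) (f 1) =
      add X (cmp X (tmap X (idm X A) (pr0 X A A)) (f 1)) (cmp X (tmap X (idm X A) (pr1 X A A)) (f 1))"
    and "cmp X (ell X A) (f 2) = f 1"
    and "cmp X (cswap X A) (f 2) = f 2"
proof -
  note laws = assms[unfolded dseq_def Let_def, THEN conjunct2, THEN spec[of _ 0], simplified]
  show "cmp X (pair X (idm X A) (zer X A A)) (f 1) = zer X A B"
    using fun_cong[OF laws[THEN conjunct1], of 0] by (simp add: act_def Dpow_def zeroseq_def)
  show "cmp X (tmap X (idm X A) (add X (pr0 X A A) (pr1 X A A))) (f 1) =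
      add X (cmp X (tmap X (idm X A) (pr0 X A A)) (f 1)) (cmp X (tmap X (idm X A) (pr1 X A A)) (f 1))"
    using fun_cong[OF laws[THEN conjunct2, THEN conjunct1], of 0] by (simp add: act_def Dpow_def addseq_def)
  show "cmp X (ell X A) (f 2) = f 1"
    using fun_cong[OF laws[THEN conjunct2, THEN conjunct2, THEN conjunct1], of 0]
    by (simp add: act_def Dpow_def numeral_2_eq_2)
  show "cmp X (cswap X A) (f 2) = f 2"
    using fun_cong[OF laws[THEN conjunct2, THEN conjunct2, THEN conjunct2], of 0]
    by (simp add: act_def Dpow_def numeral_2_eq_2)
qed

context
  fixes X :: "('o, 'a, 'm) cla_struct_scheme" and \<omega> :: "'a \<Rightarrow> nat \<Rightarrow> 'a"
  assumes coalg: "D_coalgebra X \<omega>"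
begin

lemma D_coalgebra_cla: "cla X"
  using coalg unfolding D_coalgebra_def by (elim conjE)

lemma D_coalgebra_dseq: "f \<in> hom X A B \<Longrightarrow> dseq X A B (\<omega> f)"
  using coalg unfolding D_coalgebra_def by (elim conjE) (simp only:)

lemma D_coalgebra_derivative_hom: "f \<in> hom X A B \<Longrightarrow> \<omega> f 1 \<in> hom X (prd X A A) B"
  using D_coalgebra_dseq unfolding dseq_def pre_dseq_def by (metis One_nat_def Pob.simps)

lemma D_coalgebra_derivative_add:
  "f \<in> hom X A B \<Longrightarrow> g \<in> hom X A B \<Longrightarrow> \<omega> (add X f g) 1 = add X (\<omega> f 1) (\<omega> g 1)"
  using coalg unfolding D_coalgebra_def by (elim conjE) (simp add: addseq_def)

lemma D_coalgebra_derivative_zero: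
  "A \<in> Ob X \<Longrightarrow> B \<in> Ob X \<Longrightarrow> \<omega> (zer X A B) 1 = zer X (prd X A A) B"
  using coalg unfolding D_coalgebra_def by (elim conjE) (simp add: zeroseq_def)

lemma D_coalgebra_derivative_id: "A \<in> Ob X \<Longrightarrow> \<omega> (idm X A) 1 = pr1 X A A"
  using coalg idseq_1[OF D_coalgebra_cla] unfolding D_coalgebra_def by (elim conjE) simp

lemma D_coalgebra_derivative_projections:
  assumes "A \<in> Ob X" and "B \<in> Ob X"
  shows "\<omega> (pr0 X A B) 1 = cmp X (pr1 X (prd X A B) (prd X A B)) (pr0 X A B)"
    and "\<omega> (pr1 X A B) 1 = cmp X (pr1 X (prd X A B) (prd X A B)) (pr1 X A B)"
proof -
  have "\<omega> (pr0 X A B) = act X (pr0 X A B) (idseq X A)" "\<omega> (pr1 X A B) = act X (pr1 X A B) (idseq X B)"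
    using coalg assms unfolding D_coalgebra_def by (elim conjE; simp)+
  then show "\<omega> (pr0 X A B) 1 = cmp X (pr1 X (prd X A B) (prd X A B)) (pr0 X A B)"
    and "\<omega> (pr1 X A B) 1 = cmp X (pr1 X (prd X A B) (prd X A B)) (pr1 X A B)"
    using act_idseq_1[OF D_coalgebra_cla] cla_pr0_hom[OF D_coalgebra_cla assms]
      cla_pr1_hom[OF D_coalgebra_cla assms] by simp_all
qed

lemma D_coalgebra_derivative_pair:
  "A \<in> Ob X \<Longrightarrow> B \<in> Ob X \<Longrightarrow> f \<in> hom X C A \<Longrightarrow> g \<in> hom X C B \<Longrightarrow>
    \<omega> (pair X f g) 1 = pair X (\<omega> f 1) (\<omega> g 1)"
  using coalg unfolding D_coalgebra_def by (elim conjE) (simp add: pairseq_def)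

lemma D_coalgebra_chain_rule:
  assumes "f \<in> hom X A B" and "g \<in> hom X B C"
  shows "\<omega> (cmp X f g) 1 = cmp X (pair X (cmp X (pr0 X A A) f) (\<omega> f 1)) (\<omega> g 1)"
proof -
  have "\<omega> (cmp X f g) = compseq X A (\<omega> f) (\<omega> g)" and "\<omega> f 0 = f"
    using coalg assms unfolding D_coalgebra_def hom_def by (elim conjE; simp)+
  then show ?thesis
    by (simp only: compseq_1)
qed

lemma D_coalgebra_second_derivative: "f \<in> hom X A B \<Longrightarrow> \<omega> (\<omega> f 1) 1 = \<omega> f 2"
  using coalg unfolding D_coalgebra_def hom_def by (elim conjE) (simp add: Dpow_def numeral_2_eq_2)

lemma D_coalgebra_derivative_vector_add:
  "f \<in> hom X A B \<Longrightarrow>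
    cmp X (tmap X (idm X A) (add X (pr0 X A A) (pr1 X A A))) (\<omega> f 1) =
      add X (cmp X (tmap X (idm X A) (pr0 X A A)) (\<omega> f 1)) (cmp X (tmap X (idm X A) (pr1 X A A)) (\<omega> f 1))"
  using dseq_laws_at_level_0(2)[OF D_coalgebra_dseq] .

lemma D_coalgebra_derivative_vector_zero:
  "f \<in> hom X A B \<Longrightarrow> cmp X (pair X (idm X A) (zer X A A)) (\<omega> f 1) = zer X A B"
  using dseq_laws_at_level_0(1)[OF D_coalgebra_dseq] .

lemma D_coalgebra_second_derivative_ell:
  "f \<in> hom X A B \<Longrightarrow> cmp X (ell X A) (\<omega> (\<omega> f 1) 1) = \<omega> f 1"
  using dseq_laws_at_level_0(3)[OF D_coalgebra_dseq] D_coalgebra_second_derivative by simp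

lemma D_coalgebra_second_derivative_symmetric:
  "f \<in> hom X A B \<Longrightarrow> cmp X (cswap X A) (\<omega> (\<omega> f 1) 1) = \<omega> (\<omega> f 1) 1"
  using dseq_laws_at_level_0(4)[OF D_coalgebra_dseq] D_coalgebra_second_derivative by simp

end

theorem proposition4p19:
  fixes X :: "('o, 'a, 'm) cla_struct_scheme" and \<omega> :: "'a \<Rightarrow> nat \<Rightarrow> 'a"
  assumes "D_coalgebra X \<omega>"
  shows "cdc X (\<lambda>f. \<omega> f 1)"
proof -
  note derivative_laws = D_coalgebra_cla D_coalgebra_derivative_hom
    D_coalgebra_derivative_add D_coalgebra_derivative_zero
    D_coalgebra_derivative_vector_add D_coalgebra_derivative_vector_zero
    D_coalgebra_derivative_id D_coalgebra_derivative_projections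
    D_coalgebra_derivative_pair D_coalgebra_chain_rule
    D_coalgebra_second_derivative_ell D_coalgebra_second_derivative_symmetric
  show ?thesis
    unfolding cdc_def
    by (intro conjI allI impI ballI; (elim conjE)?; rule derivative_laws[OF assms]; assumption)
qed

end
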